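(* Let $J$ be a compatible almost complex structure on $T^*S$ and $\delta\in(0,\delta_0)$ such that for every link $K\subset B(\delta)$, every $J$-holomorphic disk with boundary on $\overline\Lambda_K$ and one positive puncture lies in $\{|p|<2\delta_0\}$. Let $K\subset B(\delta)$ be a link transverse to $\xi_0$. Then $\overline\Lambda_K$ and $\overline H_\pm$ are disjoint in $T^*S$, and $\overline H_\pm\setminus\overline H_\pm(2\delta_0)$ does not intersect any $J$-holomorphic disk with boundary on $\overline\Lambda_K$ and one positive puncture.
   Context: $\alpha_0=dx_3-x_2\,dx_1+x_1\,dx_2$, $\xi_0=\ker\alpha_0$; $B(\delta)$ is the ball of radius $\delta$ about the origin of $\mathbb{R}^3$. Fix $\delta_0>0$ and let $S\subset\mathbb{R}^3$ be the smooth boundary of a compact convex set containing the origin in its interior, symmetric under reflection in the $y_1y_2$-plane and rotations about the $y_3$-axis, with $S\cap\{y_1^2+y_2^2\le9\delta_0^2\}=\{(y_1,y_2,\pm1):y_1^2+y_2^2\le9\delta_0^2\}$; $\nu$ its outward unit normal; $E_{2\delta_0}=\{(y_1,y_2,\pm1):y_1^2+y_2^2\le4\delta_0^2\}$. $S^*\mathbb{R}^3=\mathbb{R}^3\times S$ is identified with $J^1(S)=T^*S\times\mathbb{R}$ (contact form $dz-p\,dq$, $p\in T_qS$, $|p|$ Euclidean) via $(x,y)\mapsto(y,x-(x\cdot\nu(y))\nu(y),x\cdot y)$; bars denote images under the projection to $T^*S$. $\Lambda_K=\{(x,y): x\in K,\ y\perp T_xK\}$ is the conormal lift; $H_\pm=\{(x,y):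 y=t(-x_2,x_1,1),\ \pm t>0\}$; $H_\pm(2\delta_0)=H_\pm\cap(T^*E_{2\delta_0}\times\mathbb{R})$. Holomorphic disks have punctures at double points of $\overline\Lambda_K$; a puncture is positive if the boundary arc before it lies on the lower sheet and the arc after it on the upper sheet. *)

theory Defs
  imports "HOL-Analysis.Analysis"
begin

type_synonym R3 = "real^3"
type_synonym pt6 = "(real^3) \<times> (real^3)"

fun Ck :: "nat \<Rightarrow> ('a::euclidean_space \<Rightarrow> 'b::real_normed_vector) \<Rightarrow> 'a set \<Rightarrow> bool" where
  "Ck 0 f U = continuous_on U f"
| "Ck (Suc k) f U = ((\<forall>x\<in>U. f differentiable (at x)) \<and>
      (\<forall>v. Ck k (\<lambda>x. frechet_derivative f (at x) v) U))"

definition smooth_on :: "'a::euclidean_space set \<Rightarrow> ('a \<Rightarrow> 'b::real_normed_vector) \<Rightarrow> bool" where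
  "smooth_on U f = (\<forall>k. Ck k f U)"

definition tangent_space :: "'a::euclidean_space set \<Rightarrow> 'a \<Rightarrow> 'a set" where
  "tangent_space M m = {v. \<exists>\<gamma>::real \<Rightarrow> 'a. (\<forall>t. \<gamma> t \<in> M) \<and> \<gamma> 0 = m \<and> (\<gamma> has_vector_derivative v) (at 0)}"

definition smooth_surface :: "R3 set \<Rightarrow> bool" where
  "smooth_surface S = (\<forall>y\<in>S. \<exists>U F. open U \<and> y \<in> U \<and> smooth_on U (F :: R3 \<Rightarrow> real) \<and>
      (\<forall>z\<in>U. \<exists>v. frechet_derivative F (at z) v \<noteq> 0) \<and> S \<inter> U = {z\<in>U. F z = 0})"

definition outward_normal :: "R3 set \<Rightarrow> R3 \<Rightarrow> R3" where
  "outward_normal C y = (THE n. norm n = 1 \<and> (\<forall>c\<in>C. n \<bullet> (c - y) \<le> 0))"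

definition rot3 :: "real \<Rightarrow> R3 \<Rightarrow> R3" where
  "rot3 \<theta> y = vector [cos \<theta> * y$1 - sin \<theta> * y$2, sin \<theta> * y$1 + cos \<theta> * y$2, y$3]"

definition refl3 :: "R3 \<Rightarrow> R3" where
  "refl3 y = vector [y$1, y$2, - (y$3)]"

definition admissible_S :: "real \<Rightarrow> R3 set \<Rightarrow> R3 set \<Rightarrow> bool" where
  "admissible_S \<delta>0 C S = (compact C \<and> convex C \<and> 0 \<in> interior C \<and> S = frontier C \<and>
      smooth_surface S \<and> (\<forall>y\<in>S. refl3 y \<in> S) \<and> (\<forall>\<theta>. \<forall>y\<in>S. rot3 \<theta> y \<in> S) \<and>
      S \<inter> {y. (y$1)\<^sup>2 + (y$2)\<^sup>2 \<le> 9 * \<delta>0\<^sup>2} =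
        {y. (y$1)\<^sup>2 + (y$2)\<^sup>2 \<le> 9 * \<delta>0\<^sup>2 \<and> (y$3 = 1 \<or> y$3 = -1)})"

definition E_set :: "real \<Rightarrow> R3 set" where
  "E_set r = {y. (y$1)\<^sup>2 + (y$2)\<^sup>2 \<le> r\<^sup>2 \<and> (y$3 = 1 \<or> y$3 = -1)}"

text \<open>T^*S realised as pairs (q,p), q in S, p tangent to S at q.\<close>
definition TstarS :: "R3 set \<Rightarrow> (R3 \<Rightarrow> R3) \<Rightarrow> pt6 set" where
  "TstarS S \<nu> = {(q,p). q \<in> S \<and> p \<bullet> \<nu> q = 0}"

text \<open>Projection R^3 x S = S^*R^3 = J^1(S) to T^*S (the 'bar').\<close>
definition bar :: "(R3 \<Rightarrow> R3) \<Rightarrow> pt6 \<Rightarrow> pt6" where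
  "bar \<nu> a = (snd a, fst a - (fst a \<bullet> \<nu> (snd a)) *\<^sub>R \<nu> (snd a))"

text \<open>The z-coordinate of J^1(S) of a point (x,y) of R^3 x S.\<close>
definition zcoord :: "pt6 \<Rightarrow> real" where
  "zcoord a = fst a \<bullet> snd a"

text \<open>Symplectic form on T^*S: omega = -d(p dq) = dq /\ dp, so that disks with one
  positive puncture have positive energy.\<close>
definition omega :: "pt6 \<Rightarrow> pt6 \<Rightarrow> real" where
  "omega v w = fst v \<bullet> snd w - snd v \<bullet> fst w"

definition compatible_acs :: "R3 set \<Rightarrow> (R3 \<Rightarrow> R3) \<Rightarrow> (pt6 \<Rightarrow> pt6 \<Rightarrow> pt6) \<Rightarrow> bool" where
  "compatible_acs S \<nu> J = (
     (\<exists>U. open U \<and> TstarS S \<nu> \<subseteq> U \<and> (\<forall>v. smooth_on U (\<lambda>m. J m v))) \<and>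
     (\<forall>m\<in>TstarS S \<nu>. linear (J m) \<and>
        (\<forall>v\<in>tangent_space (TstarS S \<nu>) m.
            J m v \<in> tangent_space (TstarS S \<nu>) m \<and> J m (J m v) = - v \<and>
            (v \<noteq> 0 \<longrightarrow> omega v (J m v) > 0) \<and>
            (\<forall>w\<in>tangent_space (TstarS S \<nu>) m. omega (J m v) (J m w) = omega v w))))"

definition alpha0 :: "R3 \<Rightarrow> R3 \<Rightarrow> real" where
  "alpha0 x v = v$3 - x$2 * v$1 + x$1 * v$2"

definition is_link :: "R3 set \<Rightarrow> bool" where
  "is_link K = (\<exists>n::nat. \<exists>\<gamma>::nat \<Rightarrow> real \<Rightarrow> R3. n \<ge> 1 \<and> K = (\<Union>i<n. range (\<gamma> i)) \<and>
      (\<forall>i<n. smooth_on UNIV (\<gamma> i) \<and> (\<forall>t. \<gamma> i (t + 1) = \<gamma> i t) \<and> inj_on (\<gamma> i) {0..<1} \<and>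
             (\<forall>t. vector_derivative (\<gamma> i) (at t) \<noteq> 0)) \<and>
      (\<forall>i<n. \<forall>j<n. i \<noteq> j \<longrightarrow> range (\<gamma> i) \<inter> range (\<gamma> j) = {}))"

definition transverse_xi0 :: "R3 set \<Rightarrow> bool" where
  "transverse_xi0 K = (\<forall>x\<in>K. \<forall>v\<in>tangent_space K x. v \<noteq> 0 \<longrightarrow> alpha0 x v \<noteq> 0)"

definition LambdaK :: "R3 set \<Rightarrow> R3 set \<Rightarrow> pt6 set" where
  "LambdaK S K = {(x,y). x \<in> K \<and> y \<in> S \<and> (\<forall>v\<in>tangent_space K x. y \<bullet> v = 0)}"

text \<open>H_+ for sigma = 1, H_- for sigma = -1.\<close>
definition Hset :: "R3 set \<Rightarrow> real \<Rightarrow> pt6 set" where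
  "Hset S \<sigma> = {(x,y). y \<in> S \<and> (\<exists>t. \<sigma> * t > 0 \<and> y = t *\<^sub>R vector [- (x$2), x$1, 1])}"

definition Hset_r :: "R3 set \<Rightarrow> real \<Rightarrow> real \<Rightarrow> pt6 set" where
  "Hset_r S \<sigma> r = {a \<in> Hset S \<sigma>. snd a \<in> E_set r}"

text \<open>u is a J-holomorphic disk with boundary punctures P and boundary on bar(Lambda_K),
  lifting along the boundary to the Legendrian Lambda_K via ul; at each puncture the lift
  jumps from a^- (arc before the puncture, counterclockwise) to a^+ (arc after).\<close>
definition hol_disk :: "R3 set \<Rightarrow> (R3 \<Rightarrow> R3) \<Rightarrow> (pt6 \<Rightarrow> pt6 \<Rightarrow> pt6) \<Rightarrow> R3 set
     \<Rightarrow> complex set \<Rightarrow> (complex \<Rightarrow> pt6) \<Rightarrow> (complex \<Rightarrow> pt6) \<Rightarrow> bool" where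
  "hol_disk S \<nu> J K P u ul = (finite P \<and> P \<subseteq> sphere 0 1 \<and>
     u ` (cball 0 1 - P) \<subseteq> TstarS S \<nu> \<and> continuous_on (cball 0 1 - P) u \<and>
     smooth_on (ball 0 1) u \<and>
     (\<forall>z\<in>ball 0 1. frechet_derivative u (at z) \<i> = J (u z) (frechet_derivative u (at z) 1)) \<and>
     continuous_on (sphere 0 1 - P) ul \<and> ul ` (sphere 0 1 - P) \<subseteq> LambdaK S K \<and>
     (\<forall>z\<in>sphere 0 1 - P. bar \<nu> (ul z) = u z) \<and>
     (\<forall>p\<in>P. \<exists>am ap. am \<in> LambdaK S K \<and> ap \<in> LambdaK S K \<and> am \<noteq> ap \<and> bar \<nu> am = bar \<nu> ap \<and>
        ((\<lambda>s. ul (p * exp (\<i> * complex_of_real s))) \<longlongrightarrow> am) (at_left 0) \<and>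
        ((\<lambda>s. ul (p * exp (\<i> * complex_of_real s))) \<longlongrightarrow> ap) (at_right 0) \<and>
        (u \<longlongrightarrow> bar \<nu> am) (at p within (cball 0 1 - P))))"

definition positive_puncture :: "(complex \<Rightarrow> pt6) \<Rightarrow> complex \<Rightarrow> bool" where
  "positive_puncture ul p = (\<exists>am ap.
        ((\<lambda>s. ul (p * exp (\<i> * complex_of_real s))) \<longlongrightarrow> am) (at_left 0) \<and>
        ((\<lambda>s. ul (p * exp (\<i> * complex_of_real s))) \<longlongrightarrow> ap) (at_right 0) \<and>
        zcoord am < zcoord ap)"

definition hol_disk_one_pos :: "R3 set \<Rightarrow> (R3 \<Rightarrow> R3) \<Rightarrow> (pt6 \<Rightarrow> pt6 \<Rightarrow> pt6) \<Rightarrow> R3 set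
     \<Rightarrow> complex set \<Rightarrow> (complex \<Rightarrow> pt6) \<Rightarrow> bool" where
  "hol_disk_one_pos S \<nu> J K P u = (\<exists>ul. hol_disk S \<nu> J K P u ul \<and>
      card {p\<in>P. positive_puncture ul p} = 1)"

end

theory Submission
  imports Defs
begin

text \<open>For \<open>(x, y) \<in> H\<^sub>\<pm>\<close> the fibre coordinate \<open>p\<close> of its image in \<open>T\<^sup>*S\<close> pairs with the rotation
  field \<open>w = (-y\<^sub>2, y\<^sub>1, 0)\<close> exactly as \<open>x\<close> does, because rotation invariance of \<open>S\<close> makes the
  outward normal orthogonal to \<open>w\<close>; together with \<open>|y\<^sub>3| \<le> 1\<close> and Cauchy--Schwarz this gives
  \<open>y\<^sub>1\<^sup>2 + y\<^sub>2\<^sup>2 \<le> |p|\<^sup>2\<close>. Hence a point of \<open>\<Lambda>\<^sub>K\<close> or of a disk sharing its image with a point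
  of \<open>H\<^sub>\<pm>\<close> lies over the flat part of \<open>S\<close>, where the normal is vertical. In the first case
  the horizontal coordinates of \<open>x\<close> are then those of the \<open>H\<^sub>\<pm>\<close> point, so \<open>y\<close> is a multiple
  of \<open>(-x\<^sub>2, x\<^sub>1, 1)\<close>: it annihilates \<open>T\<^sub>xK\<close> and represents \<open>\<alpha>\<^sub>0\<close>, contradicting transversality.
  In the second case \<open>|p| < 2\<delta>\<^sub>0\<close> puts \<open>y\<close> in \<open>E(2\<delta>\<^sub>0)\<close>.\<close>

lemma zero_if_near_linear:
  fixes g :: "real \<Rightarrow> real"
  assumes "continuous_on {- a..a} g" "a > 0" "c > 0" "\<And>s. \<bar>s\<bar> \<le> a \<Longrightarrow> \<bar>g s - s * c\<bar> \<le> a * c / 2"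
  obtains s where "\<bar>s\<bar> \<le> a" "g s = 0"
proof -
  have "a * c > 0" using assms(2,3) by simp
  then have "g (- a) \<le> 0" "0 \<le> g a"
    using assms(2) assms(4)[of "- a"] assms(4)[of a] unfolding abs_le_iff by auto
  then obtain s where "- a \<le> s" "s \<le> a" "g s = 0"
    using IVT'[of g "- a" 0 a] assms(1,2) by force
  then show thesis using that[of s] by (simp add: abs_le_iff)
qed

text \<open>Along the line \<open>s \<mapsto> y + \<epsilon> v + s u\<close>, with \<open>D u > 0\<close>, \<open>F\<close> is close to \<open>s D u\<close>, so
  for small \<open>\<epsilon>\<close> it has a zero with \<open>|s| \<le> \<eta> \<epsilon>\<close>.\<close>
lemma level_set_meets_near_kernel_direction:
  fixes F :: "'a::real_normed_vector \<Rightarrow> real"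
  assumes F': "(F has_derivative D) (at y)" and cont: "continuous_on U F"
    and U: "open U" "y \<in> U" and Fy: "F y = 0"
    and Dv: "D v = 0" and Dw: "D w \<noteq> 0" and \<eta>: "\<eta> > 0"
  obtains \<epsilon> z where "\<epsilon> > 0" "z \<in> U" "F z = 0" "norm (z - (y + \<epsilon> *\<^sub>R v)) \<le> \<eta> * \<epsilon>"
proof -
  have lin: "linear D"
    using F' has_derivative_bounded_linear bounded_linear.linear by blast
  define u where "u = (1 / norm w) *\<^sub>R (if D w > 0 then w else - w)"
  have "w \<noteq> 0" using Dw linear_0[OF lin] by auto
  then have u1: "norm u = 1" by (simp add: u_def)
  define d where "d = D u"
  have d: "d > 0"
    using Dw \<open>w \<noteq> 0\<close> by (simp add: d_def u_def linear_scale[OF lin] linear_neg[OF lin])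
  define L where "L = norm v + \<eta>"
  have L: "L > 0" using \<eta> by (simp add: L_def add_nonneg_pos)
  have "\<eta> * d / (2 * L) > 0" using \<eta> d L by simp
  then obtain \<rho> where \<rho>: "\<rho> > 0"
    and approx: "\<And>z. norm (z - y) < \<rho> \<Longrightarrow> \<bar>F z - D (z - y)\<bar> \<le> \<eta> * d / (2 * L) * norm (z - y)"
    using F' Fy unfolding has_derivative_at_alt by (metis real_norm_def diff_zero)
  obtain r where r: "r > 0" "ball y r \<subseteq> U" using U by (meson open_contains_ball)
  define \<epsilon> where "\<epsilon> = min \<rho> r / (2 * L)"
  have \<epsilon>: "\<epsilon> > 0" using \<rho> r L by (simp add: \<epsilon>_def)
  have "\<epsilon> * L = min \<rho> r / 2" using L by (simp add: \<epsilon>_def)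
  moreover have "min \<rho> r > 0" using \<rho> r by simp
  ultimately have \<epsilon>L: "\<epsilon> * L < min \<rho> r" by linarith
  define p where "p s = y + \<epsilon> *\<^sub>R v + s *\<^sub>R u" for s
  have p_near: "norm (p s - y) \<le> \<epsilon> * L" if "\<bar>s\<bar> \<le> \<eta> * \<epsilon>" for s
  proof -
    have "norm (p s - y) \<le> \<epsilon> * norm v + \<bar>s\<bar>"
      using \<epsilon> u1 norm_triangle_ineq[of "\<epsilon> *\<^sub>R v" "s *\<^sub>R u"] by (simp add: p_def)
    also have "\<dots> \<le> \<epsilon> * L" using that by (simp add: L_def algebra_simps)
    finally show ?thesis .
  qed
  have pU: "p s \<in> U" if "\<bar>s\<bar> \<le> \<eta> * \<epsilon>" for s
    using p_near[OF that] \<epsilon>L r by (auto simp: dist_norm norm_minus_commute)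
  have "\<bar>F (p s) - s * d\<bar> \<le> \<eta> * \<epsilon> * d / 2" if "\<bar>s\<bar> \<le> \<eta> * \<epsilon>" for s
  proof -
    have "D (p s - y) = s * d"
      using Dv by (simp add: p_def d_def linear_add[OF lin] linear_scale[OF lin])
    then have "\<bar>F (p s) - s * d\<bar> \<le> \<eta> * d / (2 * L) * norm (p s - y)"
      using approx[of "p s"] p_near[OF that] \<epsilon>L by fastforce
    also have "\<dots> \<le> \<eta> * d / (2 * L) * (\<epsilon> * L)"
      using p_near[OF that] \<eta> d L by (intro mult_left_mono) auto
    also have "\<dots> = \<eta> * \<epsilon> * d / 2" using L by (simp add: field_simps)
    finally show ?thesis .
  qed
  moreover have "continuous_on {- (\<eta> * \<epsilon>)..\<eta> * \<epsilon>} (\<lambda>s. F (p s))"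
    using pU by (intro continuous_on_compose2[OF cont]) (auto simp: p_def intro!: continuous_intros)
  ultimately obtain s where s: "\<bar>s\<bar> \<le> \<eta> * \<epsilon>" "F (p s) = 0"
    using zero_if_near_linear[of "\<eta> * \<epsilon>" "\<lambda>s. F (p s)" d] \<eta> \<epsilon> d by auto
  moreover have "norm (p s - (y + \<epsilon> *\<^sub>R v)) = \<bar>s\<bar>" using u1 by (simp add: p_def)
  ultimately show thesis using that[OF \<epsilon> pU[OF s(1)]] by simp
qed

lemma supporting_normal_orthogonal_to_kernel:
  fixes F :: "'a::real_inner \<Rightarrow> real"
  assumes F': "(F has_derivative D) (at y)" and cont: "continuous_on U F"
    and U: "open U" "y \<in> U" and Fy: "F y = 0"
    and level_set: "{z\<in>U. F z = 0} \<subseteq> C" and supp: "\<forall>c\<in>C. n \<bullet> (c - y) \<le> 0"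
    and Dw: "D w \<noteq> 0" and Dv: "D v = 0"
  shows "n \<bullet> v = 0"
proof -
  have nonpos: "n \<bullet> v' \<le> 0" if kernel: "D v' = 0" for v'
  proof (rule ccontr)
    assume "\<not> n \<bullet> v' \<le> 0"
    then have pos: "n \<bullet> v' > 0" by simp
    define \<eta> where "\<eta> = n \<bullet> v' / 2 / (norm n + 1)"
    have \<eta>: "\<eta> > 0" using pos by (simp add: \<eta>_def add_nonneg_pos)
    obtain \<epsilon> z where \<epsilon>: "\<epsilon> > 0" and z: "z \<in> U" "F z = 0"
      and near: "norm (z - (y + \<epsilon> *\<^sub>R v')) \<le> \<eta> * \<epsilon>"
      using level_set_meets_near_kernel_direction[OF F' cont U Fy kernel Dw \<eta>] by blast
    have "n \<bullet> (z - (y + \<epsilon> *\<^sub>R v')) \<ge> - (norm n * (\<eta> * \<epsilon>))"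
      using Cauchy_Schwarz_ineq2[of n "z - (y + \<epsilon> *\<^sub>R v')"] near
        mult_left_mono[OF near norm_ge_zero[of n]] by linarith
    moreover have "norm n * (\<eta> * \<epsilon>) \<le> \<epsilon> * (n \<bullet> v') / 2"
    proof -
      have "norm n + 1 \<noteq> 0" using norm_ge_zero[of n] by linarith
      then have "(norm n + 1) * \<eta> = n \<bullet> v' / 2"
        by (simp add: \<eta>_def field_simps)
      then have "norm n * \<eta> \<le> n \<bullet> v' / 2" using \<eta> by (simp add: algebra_simps)
      then have "\<epsilon> * (norm n * \<eta>) \<le> \<epsilon> * (n \<bullet> v' / 2)"
        using \<epsilon> by (intro mult_left_mono) auto
      then show ?thesis by (simp add: algebra_simps)
    qed
    moreover have "n \<bullet> (z - y) = \<epsilon> * (n \<bullet> v') + n \<bullet> (z - (y + \<epsilon> *\<^sub>R v'))"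
      by (simp add: inner_diff_right inner_add_right)
    moreover have "n \<bullet> (z - y) \<le> 0" using supp level_set z by blast
    moreover have "\<epsilon> * (n \<bullet> v') > 0" using \<epsilon> pos by simp
    ultimately show False by linarith
  qed
  have "linear D" using F' has_derivative_bounded_linear bounded_linear.linear by blast
  then have "D (- v) = 0" using Dv by (simp add: linear_neg)
  then have "n \<bullet> (- v) \<le> 0" by (rule nonpos)
  then show ?thesis using nonpos[OF Dv] by simp
qed

lemma unit_supporting_normal_exists:
  fixes C :: "'a::euclidean_space set"
  assumes "convex C" "interior C \<noteq> {}" "y \<in> frontier C"
  obtains n where "norm n = 1" "\<forall>c\<in>C. n \<bullet> (c - y) \<le> 0"
proof -
  have "y \<in> closure C" "y \<notin> rel_interior C"
    using assms rel_interior_nonempty_interior by (auto simp: frontier_def)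
  then obtain a where a: "a \<noteq> 0" "\<And>c. c \<in> closure C \<Longrightarrow> a \<bullet> y \<le> a \<bullet> c"
    using supporting_hyperplane_relative_frontier[OF assms(1)] by metis
  show thesis
  proof
    show "norm (- (1 / norm a) *\<^sub>R a) = 1" using a(1) by simp
    show "\<forall>c\<in>C. (- (1 / norm a) *\<^sub>R a) \<bullet> (c - y) \<le> 0"
      using a(2) closure_subset by (fastforce simp: inner_diff_right divide_simps)
  qed
qed

lemma supporting_normal_inner_pos:
  fixes n :: "'a::real_inner"
  assumes "a \<in> interior C" "n \<noteq> 0" "\<forall>c\<in>C. n \<bullet> (c - y) \<le> 0"
  shows "n \<bullet> (y - a) > 0"
proof -
  obtain e where e: "e > 0" "ball a e \<subseteq> C" using assms(1) by (meson mem_interior)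
  define t where "t = e / (2 * norm n)"
  have "a + t *\<^sub>R n \<in> ball a e"
    using e assms(2) by (simp add: t_def dist_norm)
  then have "n \<bullet> (a + t *\<^sub>R n - y) \<le> 0" using assms(3) e by blast
  moreover have "t * (n \<bullet> n) > 0" using e assms(2) by (simp add: t_def)
  ultimately show ?thesis by (simp add: inner_diff_right inner_add_right algebra_simps)
qed

lemma eq_scaleR_if_orthogonal_complement_orthogonal:
  fixes n g :: "'a::real_inner"
  assumes "g \<noteq> 0" "\<forall>v. v \<bullet> g = 0 \<longrightarrow> n \<bullet> v = 0"
  shows "n = ((n \<bullet> g) / (g \<bullet> g)) *\<^sub>R g"
proof -
  define m where "m = n - ((n \<bullet> g) / (g \<bullet> g)) *\<^sub>R g"
  have "m \<bullet> g = 0" using assms(1) by (simp add: m_def inner_diff_left)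
  moreover from this have "n \<bullet> m = 0" using assms(2) by blast
  ultimately have "m \<bullet> m = 0" by (simp add: m_def inner_diff_left inner_commute)
  then show ?thesis by (simp add: m_def)
qed

text \<open>A supporting normal is orthogonal to the kernel of \<open>D\<close>, hence parallel to the gradient.\<close>
lemma unit_supporting_normal_unique:
  fixes F :: "'a::euclidean_space \<Rightarrow> real"
  assumes F': "(F has_derivative D) (at y)" and cont: "continuous_on U F"
    and U: "open U" "y \<in> U" and Fy: "F y = 0"
    and level_set: "{z\<in>U. F z = 0} \<subseteq> C" and Dw: "D w \<noteq> 0" and a: "a \<in> interior C"
    and n1: "norm n1 = 1" "\<forall>c\<in>C. n1 \<bullet> (c - y) \<le> 0"
    and n2: "norm n2 = 1" "\<forall>c\<in>C. n2 \<bullet> (c - y) \<le> 0"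
  shows "n1 = n2"
proof -
  have "linear D" using F' has_derivative_bounded_linear bounded_linear.linear by blast
  define g where "g = adjoint D 1"
  have Dg: "D v = v \<bullet> g" for v using adjoint_works[OF \<open>linear D\<close>, of v 1] by (simp add: g_def)
  have "g \<noteq> 0" using Dw Dg by auto
  have parallel: "\<exists>k. n = k *\<^sub>R g \<and> \<bar>k\<bar> * norm g = 1 \<and> k * (g \<bullet> (y - a)) > 0"
    if "norm n = 1" "\<forall>c\<in>C. n \<bullet> (c - y) \<le> 0" for n
  proof (intro exI conjI)
    have "\<forall>v. v \<bullet> g = 0 \<longrightarrow> n \<bullet> v = 0"
      using supporting_normal_orthogonal_to_kernel[OF F' cont U Fy level_set that(2) Dw] Dg by simp
    then show n: "n = ((n \<bullet> g) / (g \<bullet> g)) *\<^sub>R g"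
      by (rule eq_scaleR_if_orthogonal_complement_orthogonal[OF \<open>g \<noteq> 0\<close>])
    show "\<bar>(n \<bullet> g) / (g \<bullet> g)\<bar> * norm g = 1" using n that(1) by (metis norm_scaleR)
    have "n \<noteq> 0" using that(1) by auto
    then have "n \<bullet> (y - a) > 0" using supporting_normal_inner_pos[OF a _ that(2)] by blast
    then show "(n \<bullet> g) / (g \<bullet> g) * (g \<bullet> (y - a)) > 0" by (metis n inner_scaleR_left)
  qed
  obtain k1 k2 where k1: "n1 = k1 *\<^sub>R g" "\<bar>k1\<bar> * norm g = 1" "k1 * (g \<bullet> (y - a)) > 0"
    and k2: "n2 = k2 *\<^sub>R g" "\<bar>k2\<bar> * norm g = 1" "k2 * (g \<bullet> (y - a)) > 0"
    using parallel[OF n1] parallel[OF n2] by blast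
  have "\<bar>k1\<bar> = \<bar>k2\<bar>" using k1(2) k2(2) \<open>g \<noteq> 0\<close> by (metis mult_right_cancel norm_eq_zero)
  moreover have "k1 * k2 > 0"
    using k1(3) k2(3) by (auto simp: zero_less_mult_iff)
  ultimately have "k1 = k2" by (auto simp: abs_if zero_less_mult_iff split: if_splits)
  then show ?thesis using k1(1) k2(1) by simp
qed

lemma inner_R3: "(x::R3) \<bullet> y = x$1 * y$1 + x$2 * y$2 + x$3 * y$3"
  by (simp add: inner_vec_def sum_3)

lemma admissible_S_subset: "admissible_S \<delta>0 C S \<Longrightarrow> S \<subseteq> C"
  by (simp add: admissible_S_def compact_imp_closed frontier_subset_closed)

lemma admissible_S_flat_iff:
  assumes "admissible_S \<delta>0 C S" "(y$1)\<^sup>2 + (y$2)\<^sup>2 \<le> 9 * \<delta>0\<^sup>2"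
  shows "y \<in> S \<longleftrightarrow> y$3 = 1 \<or> y$3 = -1"
  using assms unfolding admissible_S_def by (simp add: set_eq_iff) metis

lemma outward_normal_supporting:
  assumes adm: "admissible_S \<delta>0 C S" and y: "y \<in> S"
  shows "norm (outward_normal C y) = 1" and "\<forall>c\<in>C. outward_normal C y \<bullet> (c - y) \<le> 0"
proof -
  have C: "convex C" "0 \<in> interior C" and "S = frontier C" "smooth_surface S"
    using adm by (auto simp: admissible_S_def)
  obtain U F where U: "open U" "y \<in> U" and F: "smooth_on U (F :: R3 \<Rightarrow> real)"
    and regular: "\<forall>z\<in>U. \<exists>v. frechet_derivative F (at z) v \<noteq> 0" and S_U: "S \<inter> U = {z\<in>U. F z = 0}"
    using \<open>smooth_surface S\<close> y unfolding smooth_surface_def by blast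
  have "Ck 0 F U" "Ck (Suc 0) F U" using F unfolding smooth_on_def by blast+
  then have cont: "continuous_on U F" and "F differentiable (at y)" using U by auto
  then have F': "(F has_derivative frechet_derivative F (at y)) (at y)"
    by (simp add: frechet_derivative_works)
  obtain w where Dw: "frechet_derivative F (at y) w \<noteq> 0" using regular U by blast
  have Fy: "F y = 0" and level_set: "{z\<in>U. F z = 0} \<subseteq> C"
    using S_U y U admissible_S_subset[OF adm] by blast+
  obtain n where "norm n = 1" "\<forall>c\<in>C. n \<bullet> (c - y) \<le> 0"
    using unit_supporting_normal_exists[OF C(1)] C(2) y \<open>S = frontier C\<close> by blast
  then have "\<exists>!n. norm n = 1 \<and> (\<forall>c\<in>C. n \<bullet> (c - y) \<le> 0)"
    using unit_supporting_normal_unique[OF F' cont U Fy level_set Dw C(2)] by blast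
  from theI'[OF this] show "norm (outward_normal C y) = 1" "\<forall>c\<in>C. outward_normal C y \<bullet> (c - y) \<le> 0"
    unfolding outward_normal_def by blast+
qed

text \<open>Rotation invariance of \<open>S\<close>: \<open>\<theta> \<mapsto> \<nu>(y) \<bullet> (rot3 \<theta> y - y)\<close> is maximal at \<open>\<theta> = 0\<close>,
  so its derivative there, the pairing with the rotation field, vanishes.\<close>
lemma outward_normal_orthogonal_rotation:
  assumes adm: "admissible_S \<delta>0 C S" and y: "y \<in> S"
  shows "outward_normal C y \<bullet> vector [- (y$2), y$1, 0] = 0"
proof -
  define N where "N = outward_normal C y"
  define \<phi> where "\<phi> \<theta> = N$1 * (cos \<theta> * y$1 - sin \<theta> * y$2 - y$1) + N$2 * (sin \<theta> * y$1 + cos \<theta> * y$2 - y$2)"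
    for \<theta>
  have "\<phi> \<theta> = N \<bullet> (rot3 \<theta> y - y)" for \<theta> by (simp add: \<phi>_def inner_R3 rot3_def)
  moreover have "rot3 \<theta> y \<in> C" for \<theta>
    using adm y admissible_S_subset[OF adm] by (auto simp: admissible_S_def)
  ultimately have max: "\<phi> \<theta> \<le> \<phi> 0" for \<theta>
    using outward_normal_supporting(2)[OF adm y] by (simp add: N_def \<phi>_def)
  have "DERIV \<phi> 0 :> N$1 * (- sin 0 * y$1 - cos 0 * y$2) + N$2 * (cos 0 * y$1 - sin 0 * y$2)"
    unfolding \<phi>_def by (rule derivative_eq_intros refl | simp)+
  then have "N$1 * (- sin 0 * y$1 - cos 0 * y$2) + N$2 * (cos 0 * y$1 - sin 0 * y$2) = 0"
    by (rule DERIV_local_max[of _ _ _ 1]) (use max in auto)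
  then show ?thesis by (simp add: N_def inner_R3)
qed

lemma inner_eq_0_if_eventually_nonpos:
  fixes n v :: "'a::real_inner"
  assumes "\<forall>\<^sub>F b in at 0. n \<bullet> (b *\<^sub>R v) \<le> 0"
  shows "n \<bullet> v = 0"
proof -
  obtain e where "e > 0" and e: "\<And>b. b \<noteq> 0 \<Longrightarrow> \<bar>b\<bar> < e \<Longrightarrow> b * (n \<bullet> v) \<le> 0"
    using assms by (auto simp: eventually_at dist_real_def)
  have "n \<bullet> v \<le> 0" using e[of "e / 2"] \<open>e > 0\<close> by (simp add: mult_le_0_iff)
  moreover have "n \<bullet> v \<ge> 0" using e[of "- e / 2"] \<open>e > 0\<close> by (simp add: zero_le_mult_iff)
  ultimately show ?thesis by simp
qed

lemma outward_normal_flat: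
  assumes adm: "admissible_S \<delta>0 C S" and y: "y \<in> S" and R: "(y$1)\<^sup>2 + (y$2)\<^sup>2 < 9 * \<delta>0\<^sup>2"
  shows "outward_normal C y = vector [0, 0, y$3]"
proof -
  define N where "N = outward_normal C y"
  have y3: "y$3 = 1 \<or> y$3 = -1" using admissible_S_flat_iff[OF adm] y R by simp
  have horizontal: "N \<bullet> v = 0" if "v$3 = 0" for v
  proof (rule inner_eq_0_if_eventually_nonpos)
    define f where "f b = ((y + b *\<^sub>R v)$1)\<^sup>2 + ((y + b *\<^sub>R v)$2)\<^sup>2" for b
    have "isCont f 0" unfolding f_def by (intro continuous_intros)
    moreover have "f 0 < 9 * \<delta>0\<^sup>2" using R by (simp add: f_def)
    ultimately have "\<forall>\<^sub>F b in at 0. f b < 9 * \<delta>0\<^sup>2" by (metis isContD order_tendstoD(2))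
    then have "\<forall>\<^sub>F b in at 0. ((y + b *\<^sub>R v)$1)\<^sup>2 + ((y + b *\<^sub>R v)$2)\<^sup>2 < 9 * \<delta>0\<^sup>2"
      by (simp add: f_def)
    then show "\<forall>\<^sub>F b in at 0. N \<bullet> (b *\<^sub>R v) \<le> 0"
    proof (rule eventually_mono)
      fix b assume "((y + b *\<^sub>R v)$1)\<^sup>2 + ((y + b *\<^sub>R v)$2)\<^sup>2 < 9 * \<delta>0\<^sup>2"
      then have "y + b *\<^sub>R v \<in> S"
        using admissible_S_flat_iff[OF adm, of "y + b *\<^sub>R v"] y3 \<open>v$3 = 0\<close> by simp
      then have "y + b *\<^sub>R v \<in> C" using admissible_S_subset[OF adm] by blast
      then have "N \<bullet> (y + b *\<^sub>R v - y) \<le> 0"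
        using outward_normal_supporting(2)[OF adm y] unfolding N_def by blast
      then show "N \<bullet> (b *\<^sub>R v) \<le> 0" by simp
    qed
  qed
  have N12: "N$1 = 0" "N$2 = 0"
    using horizontal[of "vector [1, 0, 0]"] horizontal[of "vector [0, 1, 0]"] by (simp_all add: inner_R3)
  have "N \<bullet> N = 1" using outward_normal_supporting(1)[OF adm y] by (simp add: N_def dot_square_norm)
  then have "(N$3)\<^sup>2 = 1" using N12 by (simp add: inner_R3 power2_eq_square)
  moreover have "0 \<in> interior C" "N \<noteq> 0"
    using adm outward_normal_supporting(1)[OF adm y] by (auto simp: admissible_S_def N_def)
  then have "N \<bullet> (y - 0) > 0"
    using supporting_normal_inner_pos outward_normal_supporting(2)[OF adm y] unfolding N_def by blast
  then have "N$3 * y$3 > 0" using N12 by (simp add: inner_R3)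
  ultimately have "N$3 = y$3" using y3 by (auto simp: power2_eq_1_iff)
  then show ?thesis using N12 by (simp add: N_def vec_eq_iff forall_3)
qed

lemma admissible_S_third_coord_bound:
  assumes adm: "admissible_S \<delta>0 C S" and "\<delta>0 > 0" and y: "y \<in> S"
  shows "\<bar>y$3\<bar> \<le> 1"
proof -
  have pole: "vector [0, 0, s] \<in> S" "outward_normal C (vector [0, 0, s]) = vector [0, 0, s]"
    if "s = 1 \<or> s = -1" for s :: real
    using admissible_S_flat_iff[OF adm] outward_normal_flat[OF adm] that \<open>\<delta>0 > 0\<close> by auto
  have "y \<in> C" using y admissible_S_subset[OF adm] by blast
  then have "vector [0, 0, s] \<bullet> (y - vector [0, 0, s]) \<le> (0::real)" if "s = 1 \<or> s = -1" for s :: real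
    using outward_normal_supporting(2)[OF adm pole(1)[OF that]] pole(2)[OF that] by simp
  from this[of 1] this[of "-1"] show ?thesis by (simp add: inner_R3)
qed

lemma norm_orthogonal_projection_le:
  assumes "norm N = 1"
  shows "norm (x - (x \<bullet> N) *\<^sub>R N) \<le> norm x"
proof -
  have "N \<bullet> N = 1" using assms by (simp add: dot_square_norm)
  then have "(x - (x \<bullet> N) *\<^sub>R N) \<bullet> (x - (x \<bullet> N) *\<^sub>R N) = x \<bullet> x - (x \<bullet> N)\<^sup>2"
    by (simp add: inner_diff_left inner_diff_right inner_commute power2_eq_square)
  then show ?thesis by (simp add: norm_le)
qed

lemma Hset_radius_le_projection:
  fixes x y N :: R3
  assumes y: "y = t *\<^sub>R vector [- (x$2), x$1, 1]" and t: "\<bar>t\<bar> \<le> 1"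
    and N: "N \<bullet> vector [- (y$2), y$1, 0] = 0"
  shows "(y$1)\<^sup>2 + (y$2)\<^sup>2 \<le> (norm (x - (x \<bullet> N) *\<^sub>R N))\<^sup>2"
proof -
  define w :: R3 where "w = vector [- (y$2), y$1, 0]"
  define p where "p = x - (x \<bullet> N) *\<^sub>R N"
  define R where "R = (y$1)\<^sup>2 + (y$2)\<^sup>2"
  have y12: "y$1 = - (t * x$2)" "y$2 = t * x$1" using y by simp_all
  have ww: "w \<bullet> w = R" by (simp add: w_def R_def inner_R3 power2_eq_square)
  define Q where "Q = (x$1)\<^sup>2 + (x$2)\<^sup>2"
  have "p \<bullet> w = x \<bullet> w" using N by (simp add: p_def w_def inner_diff_left)
  also have "\<dots> = - t * Q"
    using y12 by (simp add: w_def Q_def inner_R3 power2_eq_square algebra_simps)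
  finally have pw: "p \<bullet> w = - t * Q" .
  have "R = t\<^sup>2 * Q" using y12 by (simp add: R_def Q_def power2_eq_square algebra_simps)
  then have "R * R = t\<^sup>2 * (p \<bullet> w)\<^sup>2" by (simp add: pw power2_eq_square)
  also have "\<dots> \<le> (p \<bullet> w)\<^sup>2"
    using t abs_square_le_1 by (intro mult_left_le_one_le) auto
  also have "\<dots> \<le> (p \<bullet> p) * R" using Cauchy_Schwarz_ineq[of p w] ww by simp
  finally have "R * R \<le> (norm p)\<^sup>2 * R" by (simp add: power2_norm_eq_inner)
  moreover have "R \<ge> 0" by (simp add: R_def)
  ultimately show ?thesis
    by (cases "R = 0") (auto simp: R_def[symmetric] p_def)
qed

lemma Hset_radius_le_fibre_norm:
  assumes adm: "admissible_S \<delta>0 C S" and "\<delta>0 > 0" and H: "(x, y) \<in> Hset S \<sigma>"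
  shows "(y$1)\<^sup>2 + (y$2)\<^sup>2 \<le> (norm (snd (bar (outward_normal C) (x, y))))\<^sup>2"
proof -
  obtain t where y: "y = t *\<^sub>R vector [- (x$2), x$1, 1]" and yS: "y \<in> S"
    using H by (auto simp: Hset_def)
  have "\<bar>t\<bar> \<le> 1" using admissible_S_third_coord_bound[OF adm \<open>\<delta>0 > 0\<close> yS] y by simp
  then show ?thesis
    using Hset_radius_le_projection[OF y _ outward_normal_orthogonal_rotation[OF adm yS]]
    by (simp add: bar_def)
qed

lemma is_link_tangent_nonzero:
  assumes "is_link K" "x \<in> K"
  obtains v where "v \<in> tangent_space K x" "v \<noteq> 0"
proof -
  obtain n and \<gamma> :: "nat \<Rightarrow> real \<Rightarrow> R3" where K: "K = (\<Union>i<n. range (\<gamma> i))"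
    and smooth: "\<And>i. i < n \<Longrightarrow> smooth_on UNIV (\<gamma> i)"
    and regular: "\<And>i t. i < n \<Longrightarrow> vector_derivative (\<gamma> i) (at t) \<noteq> 0"
    using assms(1) unfolding is_link_def by metis
  obtain i t0 where i: "i < n" and x: "x = \<gamma> i t0" using K assms(2) by blast
  have "Ck (Suc 0) (\<gamma> i) UNIV" using smooth[OF i] unfolding smooth_on_def by blast
  then have "(\<gamma> i has_vector_derivative vector_derivative (\<gamma> i) (at t0)) (at t0)"
    by (simp add: vector_derivative_works)
  moreover have "((\<lambda>s. t0 + s) has_vector_derivative 1) (at 0)"
    by (auto intro!: derivative_eq_intros)
  ultimately have "((\<lambda>s. \<gamma> i (t0 + s)) has_vector_derivative vector_derivative (\<gamma> i) (at t0)) (at 0)"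
    using vector_diff_chain_at[of "\<lambda>s. t0 + s" 1 0 "\<gamma> i"] by (simp add: o_def)
  moreover have "\<gamma> i (t0 + s) \<in> K" for s using K i by blast
  ultimately have "vector_derivative (\<gamma> i) (at t0) \<in> tangent_space K x"
    unfolding tangent_space_def using x by force
  then show thesis using that regular[OF i] by blast
qed

lemma bar_LambdaK_disjoint_bar_Hset:
  assumes adm: "admissible_S \<delta>0 C S" and "\<delta>0 > 0"
    and K: "is_link K" "transverse_xi0 K" "K \<subseteq> ball 0 (3 * \<delta>0)"
  shows "bar (outward_normal C) ` LambdaK S K \<inter> bar (outward_normal C) ` Hset S \<sigma> = {}"
proof (rule ccontr)
  let ?\<nu> = "outward_normal C"
  assume "bar ?\<nu> ` LambdaK S K \<inter> bar ?\<nu> ` Hset S \<sigma> \<noteq> {}"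
  then obtain x y x' y' where L: "(x, y) \<in> LambdaK S K" and H: "(x', y') \<in> Hset S \<sigma>"
    and eq: "bar ?\<nu> (x, y) = bar ?\<nu> (x', y')" by force
  have "y' = y" and proj: "x - (x \<bullet> ?\<nu> y) *\<^sub>R ?\<nu> y = x' - (x' \<bullet> ?\<nu> y) *\<^sub>R ?\<nu> y"
    using eq by (auto simp: bar_def)
  have x: "x \<in> K" and yS: "y \<in> S" and conormal: "\<forall>v\<in>tangent_space K x. y \<bullet> v = 0"
    using L by (auto simp: LambdaK_def)
  obtain t where "\<sigma> * t > 0" and y: "y = t *\<^sub>R vector [- (x'$2), x'$1, 1]"
    using H \<open>y' = y\<close> by (auto simp: Hset_def)
  have "(y$1)\<^sup>2 + (y$2)\<^sup>2 \<le> (norm (x - (x \<bullet> ?\<nu> y) *\<^sub>R ?\<nu> y))\<^sup>2"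
    using Hset_radius_le_fibre_norm[OF adm \<open>\<delta>0 > 0\<close> H] \<open>y' = y\<close> proj by (simp add: bar_def)
  also have "\<dots> \<le> (norm x)\<^sup>2"
    using norm_orthogonal_projection_le[OF outward_normal_supporting(1)[OF adm yS]]
    by (simp add: power_mono)
  also have "\<dots> < (3 * \<delta>0)\<^sup>2" using x K(3) by (intro power_strict_mono) auto
  finally have "?\<nu> y = vector [0, 0, y$3]"
    using outward_normal_flat[OF adm yS] by (simp add: power_mult_distrib)
  then have "x$1 = x'$1" "x$2 = x'$2"
    using arg_cong[OF proj, of "\<lambda>z. z$1"] arg_cong[OF proj, of "\<lambda>z. z$2"] by simp_all
  then have y: "y = t *\<^sub>R vector [- (x$2), x$1, 1]" using y by simp
  obtain v where v: "v \<in> tangent_space K x" "v \<noteq> 0" using is_link_tangent_nonzero[OF K(1) x] .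
  have "t * alpha0 x v = y \<bullet> v" using y by (simp add: inner_R3 alpha0_def algebra_simps)
  then have "alpha0 x v = 0" using conormal v(1) \<open>\<sigma> * t > 0\<close> by auto
  then show False using K(2) x v unfolding transverse_xi0_def by blast
qed

lemma bar_Hset_mem_bar_Hset_r:
  assumes adm: "admissible_S \<delta>0 C S" and "\<delta>0 > 0"
    and q: "q \<in> bar (outward_normal C) ` Hset S \<sigma>" and "norm (snd q) < r" "r \<le> 3 * \<delta>0"
  shows "q \<in> bar (outward_normal C) ` Hset_r S \<sigma> r"
proof -
  obtain x y where H: "(x, y) \<in> Hset S \<sigma>" and q: "q = bar (outward_normal C) (x, y)"
    using q by auto
  have "(y$1)\<^sup>2 + (y$2)\<^sup>2 \<le> (norm (snd q))\<^sup>2" using Hset_radius_le_fibre_norm[OF adm \<open>\<delta>0 > 0\<close> H] q by simp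
  also have "\<dots> < r\<^sup>2" using \<open>norm (snd q) < r\<close> by (simp add: power_strict_mono)
  finally have r: "(y$1)\<^sup>2 + (y$2)\<^sup>2 \<le> r\<^sup>2" by simp
  moreover have "r \<ge> 0" using \<open>norm (snd q) < r\<close> norm_ge_zero[of "snd q"] by linarith
  then have "r\<^sup>2 \<le> (3 * \<delta>0)\<^sup>2" using \<open>r \<le> 3 * \<delta>0\<close> by (intro power_mono)
  then have "r\<^sup>2 \<le> 9 * \<delta>0\<^sup>2" by (simp add: power_mult_distrib)
  moreover have "y \<in> S" using H by (simp add: Hset_def)
  ultimately have "y \<in> E_set r" using admissible_S_flat_iff[OF adm] by (simp add: E_set_def)
  then show ?thesis using H q by (auto simp: Hset_r_def)
qed

theorem lemma3p8:
  fixes \<delta>0 \<delta> :: real and C S :: "R3 set" and \<nu> :: "R3 \<Rightarrow> R3"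
    and J :: "pt6 \<Rightarrow> pt6 \<Rightarrow> pt6" and K :: "R3 set"
  assumes "\<delta>0 > 0"
    and "admissible_S \<delta>0 C S"
    and "\<nu> = outward_normal C"
    and "compatible_acs S \<nu> J"
    and "0 < \<delta>" and "\<delta> < \<delta>0"
    and "\<forall>K'. is_link K' \<and> K' \<subseteq> ball 0 \<delta> \<longrightarrow>
           (\<forall>P u. hol_disk_one_pos S \<nu> J K' P u \<longrightarrow>
              (\<forall>z\<in>cball 0 1 - P. norm (snd (u z)) < 2 * \<delta>0))"
    and "is_link K" and "K \<subseteq> ball 0 \<delta>" and "transverse_xi0 K"
  shows "\<forall>\<sigma>\<in>{1, -1::real}.
           bar \<nu> ` LambdaK S K \<inter> bar \<nu> ` Hset S \<sigma> = {} \<and>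
           (\<forall>P u. hol_disk_one_pos S \<nu> J K P u \<longrightarrow>
              (\<forall>z\<in>cball 0 1 - P. u z \<notin> bar \<nu> ` Hset S \<sigma> - bar \<nu> ` Hset_r S \<sigma> (2 * \<delta>0)))"
proof (intro ballI conjI allI impI)
  fix \<sigma> :: real
  have "K \<subseteq> ball 0 (3 * \<delta>0)" using assms(1,6,9) by auto
  then show "bar \<nu> ` LambdaK S K \<inter> bar \<nu> ` Hset S \<sigma> = {}"
    using bar_LambdaK_disjoint_bar_Hset[OF assms(2,1,8,10)] assms(3) by simp
next
  fix \<sigma> :: real and P u z
  assume "hol_disk_one_pos S \<nu> J K P u" and "z \<in> cball 0 1 - P"
  then have "norm (snd (u z)) < 2 * \<delta>0" using assms(7-9) by blast
  then show "u z \<notin> bar \<nu> ` Hset S \<sigma> - bar \<nu> ` Hset_r S \<sigma> (2 * \<delta>0)"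
    using bar_Hset_mem_bar_Hset_r[OF assms(2,1)] assms(1,3) by auto
qed

end
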